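(* Let $F$ be Thompson's group and let $x_0,x_1\in F$ be its standard generators (defined in the context). Let $g\in F$ and let $H=\langle (x_0x_1)^g\rangle$, where $(x_0x_1)^g=g^{-1}x_0x_1g$. Then there exist $f\in H$ and $m,n\in\mathbb{N}$ such that $f$ has the pairs of branches $0^m10\rightarrow 1^n0$ and $0^m11\rightarrow 1^{n+1}0$.
   Context: Thompson's group $F$ is the group of all piecewise linear homeomorphisms of $[0,1]$ with finitely many breakpoints, all at finite dyadic fractions, and all slopes integer powers of $2$. Composition is from left to right: $fg$ means first apply $f$, then $g$; and $a^g=g^{-1}ag$. Writing points of $(0,1)$ as binary expansions $.s$ with $s$ an infinite binary word, $x_0$ maps $.00\alpha\mapsto .0\alpha$, $.01\alpha\mapsto .10\alpha$, $.1\alpha\mapsto .11\alpha$, and $x_1$ maps $.0\alpha\mapsto .0\alpha$, $.100\alpha\mapsto .10\alpha$, $.101\alpha\mapsto .110\alpha$, $.11\alpha\mapsto .111\alpha$ (for every infinite binary word $\alpha$). For finite binary words $u,v$, an element $f\in F$ has the pair of branches $u\rightarrow v$ if $f(.u\alpha)=.v\alpha$ for every infinite binary word $\alpha$ (i.e. $f$ maps the dyadic interval $[.u,.u1^{\mathbb{N}}]$ linearly onto $[.v,.v1^{\mathbb{N}}]$). $0^m$ denotes the word of $m$ zeros, $1^n$ the word of $n$ ones. *)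

theory Defs
  imports Complex_Main
begin

text \<open>Infinite binary words are functions nat => bool (False = digit 0, True = digit 1);
  finite words are bool lists. The point .s of [0,1] for an infinite word s.\<close>

definition bin_val :: "(nat \<Rightarrow> bool) \<Rightarrow> real" where
  "bin_val s = (\<Sum>i. (if s i then 1 else 0) / 2 ^ (Suc i))"

definition wconc :: "bool list \<Rightarrow> (nat \<Rightarrow> bool) \<Rightarrow> (nat \<Rightarrow> bool)" where
  "wconc u \<alpha> = (\<lambda>i. if i < length u then u ! i else \<alpha> (i - length u))"

definition dyadic :: "real \<Rightarrow> bool" where
  "dyadic x \<longleftrightarrow> (\<exists>a::int. \<exists>k::nat. x = of_int a / 2 ^ k)"

text \<open>Thompson's group F, realised as functions real => real that restrict to a PL
  homeomorphism of [0,1] (finitely many dyadic breakpoints, slopes integer powers of 2)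
  and are the identity outside [0,1].\<close>
definition thompson_F :: "(real \<Rightarrow> real) set" where
  "thompson_F = {f. bij_betw f {0..1} {0..1} \<and> (\<forall>x. x \<notin> {0..1} \<longrightarrow> f x = x) \<and>
     (\<exists>bs :: real list. length bs \<ge> 2 \<and> hd bs = 0 \<and> last bs = 1 \<and>
        sorted_wrt (<) bs \<and> (\<forall>b\<in>set bs. dyadic b) \<and>
        (\<forall>i < length bs - 1. \<exists>k::int. \<forall>x\<in>{bs ! i .. bs ! Suc i}.
            f x = f (bs ! i) + (2::real) powi k * (x - bs ! i)))}"

definition x0 :: "real \<Rightarrow> real" where
  "x0 x = (if x < 0 \<or> x > 1 then x
           else if x \<le> 1/4 then 2 * x
           else if x \<le> 1/2 then x + 1/4
           else x / 2 + 1/2)"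

definition x1 :: "real \<Rightarrow> real" where
  "x1 x = (if x < 0 \<or> x > 1 then x
           else if x \<le> 1/2 then x
           else if x \<le> 5/8 then 2 * x - 1/2
           else if x \<le> 3/4 then x + 1/8
           else x / 2 + 1/2)"

text \<open>Group product with left-to-right convention: (f g) means first f then g.\<close>
definition tmult :: "(real \<Rightarrow> real) \<Rightarrow> (real \<Rightarrow> real) \<Rightarrow> (real \<Rightarrow> real)" where
  "tmult f g = g \<circ> f"

definition tconj :: "(real \<Rightarrow> real) \<Rightarrow> (real \<Rightarrow> real) \<Rightarrow> (real \<Rightarrow> real)" where
  "tconj a g = tmult (tmult (inv g) a) g"

definition tpow :: "(real \<Rightarrow> real) \<Rightarrow> int \<Rightarrow> (real \<Rightarrow> real)" where
  "tpow h k = (if k \<ge> 0 then h ^^ nat k else (inv h) ^^ nat (- k))"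

definition cyclic_sub :: "(real \<Rightarrow> real) \<Rightarrow> (real \<Rightarrow> real) set" where
  "cyclic_sub h = range (tpow h)"

definition has_branch :: "(real \<Rightarrow> real) \<Rightarrow> bool list \<Rightarrow> bool list \<Rightarrow> bool" where
  "has_branch f u v \<longleftrightarrow> (\<forall>\<alpha>. f (bin_val (wconc u \<alpha>)) = bin_val (wconc v \<alpha>))"

end

theory Submission
  imports Defs
begin

text \<open>
  Pairs of branches compose, invert, and extend by a common suffix. The product x0 x1 has
  the branches 00 -> 0, 010 -> 10, 011 -> 110 and 1 -> 111; hence its (j+1+r)-th power maps
  0^(j+1)10 and 0^(j+1)11 first to 010 and 011, then to 10 and 110, and finally to
  1^(2r+1)0 and 1^(2r+1)10. An element g of F fixes 0 and 1 and is linear with slope a power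
  of two near both endpoints, so it has branches 0^p -> 0^q and 1^p' -> 1^q'. In the
  (p+1+p')-th power of the conjugate, g^-1 carries 0^(q+1) to 0^(p+1) and g carries
  1^(2p'+1) to 1^n with n = q' + p' + 1, which gives the theorem with m = q + 1.
\<close>

lemma wconc_Nil [simp]: "wconc [] \<alpha> = \<alpha>"
  by (simp add: wconc_def)

lemma wconc_append: "wconc (u @ v) \<alpha> = wconc u (wconc v \<alpha>)"
  by (auto simp: wconc_def nth_append fun_eq_iff)

lemma summable_bin_val: "summable (\<lambda>i. (if s i then 1 else 0) / (2::real) ^ Suc i)"
proof (rule summable_comparison_test)
  show "\<exists>N. \<forall>i\<ge>N. norm ((if s i then 1 else 0) / (2::real) ^ Suc i) \<le> (1/2) ^ Suc i"
    by (auto simp: power_divide)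
  show "summable (\<lambda>i. (1/2::real) ^ Suc i)"
    by (simp add: summable_geometric_iff)
qed

lemma bin_val_shift: "bin_val s = (if s 0 then 1/2 else 0) + bin_val (\<lambda>i. s (Suc i)) / 2"
  unfolding bin_val_def
  using suminf_split_head[OF summable_bin_val[of s]]
    suminf_divide[OF summable_bin_val[of "\<lambda>i. s (Suc i)"], of 2]
  by (simp add: field_simps split: if_splits)

lemma bin_val_nonneg: "0 \<le> bin_val s"
  unfolding bin_val_def by (rule suminf_nonneg[OF summable_bin_val]) simp

lemma bin_val_le_1: "bin_val s \<le> 1"
proof -
  have geom: "(\<lambda>i. (1/2::real) ^ Suc i) sums 1"
    using sums_mult[OF geometric_sums[of "1/2::real"], of "1/2"] by simp
  have "bin_val s \<le> (\<Sum>i. (1/2::real) ^ Suc i)"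
    unfolding bin_val_def
    by (rule suminf_le[OF _ summable_bin_val sums_summable[OF geom]]) (simp add: power_divide)
  then show ?thesis using sums_unique[OF geom] by simp
qed

lemma bin_val_Cons: "bin_val (wconc (b # u) \<alpha>) = (if b then 1/2 else 0) + bin_val (wconc u \<alpha>) / 2"
proof -
  have "(\<lambda>i. wconc (b # u) \<alpha> (Suc i)) = wconc u \<alpha>"
    by (auto simp: wconc_def fun_eq_iff)
  then show ?thesis
    using bin_val_shift[of "wconc (b # u) \<alpha>"] by (simp add: wconc_def)
qed

lemma bin_val_zeros: "bin_val (wconc (replicate p False) \<alpha>) = bin_val \<alpha> / 2 ^ p"
  by (induction p) (simp_all add: bin_val_Cons)

lemma bin_val_ones: "bin_val (wconc (replicate p True) \<alpha>) = 1 - (1 - bin_val \<alpha>) / 2 ^ p"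
  by (induction p) (simp_all add: bin_val_Cons field_simps)

lemma has_branch_comp:
  "has_branch f u v \<Longrightarrow> has_branch g v w \<Longrightarrow> has_branch (g \<circ> f) u w"
  by (simp add: has_branch_def)

lemma has_branch_append: "has_branch f u v \<Longrightarrow> has_branch f (u @ w) (v @ w)"
  by (simp add: has_branch_def wconc_append)

lemma has_branch_inv: "inj f \<Longrightarrow> has_branch f u v \<Longrightarrow> has_branch (inv f) v u"
  by (metis has_branch_def inv_f_f)

lemma has_branch_replicate_shift:
  "has_branch f (replicate p b) (replicate q b) \<Longrightarrow>
   has_branch f (replicate (p + k) b @ w) (replicate (q + k) b @ w)"
  using has_branch_append[of f "replicate p b" "replicate q b" "replicate k b @ w"]
  by (simp add: replicate_add)

lemma power_eq_power_mult_power_int: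
  fixes x :: "'a::field"
  assumes "x \<noteq> 0" "int p = int q + a"
  shows "x ^ p = x ^ q * x powi a"
proof -
  have "x ^ p = x powi (int q + a)"
    by (simp only: power_int_of_nat[symmetric] assms(2))
  also have "\<dots> = x ^ q * x powi a"
    using assms(1) by (simp add: power_int_add)
  finally show ?thesis .
qed

lemma pow2_shift_below:
  fixes a :: int and \<delta> :: real
  assumes "\<delta> > 0"
  obtains p q :: nat where "1 / 2 ^ p < \<delta>" "(2::real) ^ p = 2 ^ q * 2 powi a"
proof -
  obtain N where N: "(1/2::real) ^ N < \<delta>"
    using real_arch_pow_inv[OF assms] by force
  define p where "p = N + nat \<bar>a\<bar>"
  have "(1/2::real) ^ p \<le> (1/2) ^ N"
    by (rule power_decreasing) (auto simp: p_def)
  then have "1 / 2 ^ p < \<delta>"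
    using N by (simp add: power_divide)
  moreover have "int p = int (nat (int p - a)) + a"
    using abs_ge_self[of a] by (simp add: p_def)
  then have "(2::real) ^ p = 2 ^ nat (int p - a) * 2 powi a"
    by (intro power_eq_power_mult_power_int) simp_all
  ultimately show ?thesis
    by (rule that)
qed

lemma has_branch_zeros_if_linear_near_0:
  assumes "\<delta> > 0" "\<forall>x\<in>{0..\<delta>}. f x = 2 powi a * x"
  obtains p q where "has_branch f (replicate p False) (replicate q False)"
proof -
  obtain p q :: nat where p: "1 / 2 ^ p < \<delta>" and pq: "(2::real) ^ p = 2 ^ q * 2 powi a"
    using pow2_shift_below[OF assms(1)] .
  have "f (bin_val \<alpha> / 2 ^ p) = bin_val \<alpha> / 2 ^ q" for \<alpha>
  proof -
    have "bin_val \<alpha> / 2 ^ p \<le> 1 / 2 ^ p"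
      using bin_val_le_1 by (simp add: divide_right_mono)
    then have "bin_val \<alpha> / 2 ^ p \<in> {0..\<delta>}"
      using p bin_val_nonneg by simp
    then show ?thesis
      using assms(2) pq by simp
  qed
  then show ?thesis
    by (intro that[of p q]) (simp add: has_branch_def bin_val_zeros)
qed

lemma has_branch_ones_if_linear_near_1:
  assumes "\<eta> > 0" "\<forall>y\<in>{1 - \<eta>..1}. f y = 1 - 2 powi b * (1 - y)"
  obtains p q where "has_branch f (replicate p True) (replicate q True)"
proof -
  obtain p q :: nat where p: "1 / 2 ^ p < \<eta>" and pq: "(2::real) ^ p = 2 ^ q * 2 powi b"
    using pow2_shift_below[OF assms(1)] .
  have "f (1 - (1 - bin_val \<alpha>) / 2 ^ p) = 1 - (1 - bin_val \<alpha>) / 2 ^ q" for \<alpha>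
  proof -
    have "(1 - bin_val \<alpha>) / 2 ^ p \<le> 1 / 2 ^ p"
      using bin_val_nonneg by (simp add: divide_right_mono)
    then have "1 - (1 - bin_val \<alpha>) / 2 ^ p \<in> {1 - \<eta>..1}"
      using p bin_val_le_1 by simp
    then show ?thesis
      using assms(2) pq by simp
  qed
  then show ?thesis
    by (intro that[of p q]) (simp add: has_branch_def bin_val_ones)
qed

lemma x0_x1_pieces:
  assumes "0 \<le> z" "z \<le> 1"
  shows "tmult x0 x1 (z / 4) = z / 2"
    and "tmult x0 x1 ((2 + z) / 8) = (2 + z) / 4"
    and "tmult x0 x1 ((3 + z) / 8) = (6 + z) / 8"
    and "tmult x0 x1 ((1 + z) / 2) = (7 + z) / 8"
  using assms by (auto simp: tmult_def x0_def x1_def field_simps)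

lemma x0_x1_branches:
  "has_branch (tmult x0 x1) [False, False] [False]"
  "has_branch (tmult x0 x1) [False, True, False] [True, False]"
  "has_branch (tmult x0 x1) [False, True, True] [True, True, False]"
  "has_branch (tmult x0 x1) [True] [True, True, True]"
  unfolding has_branch_def
  using x0_x1_pieces[OF bin_val_nonneg bin_val_le_1]
  by (simp_all add: bin_val_Cons field_simps)

lemma x0_x1_funpow_zeros:
  "has_branch (tmult x0 x1 ^^ j) (replicate j False @ False # w) (False # w)"
proof (induction j)
  case (Suc j)
  have "has_branch (tmult x0 x1) (replicate (Suc j) False @ False # w) (replicate j False @ False # w)"
    using has_branch_append[OF x0_x1_branches(1), of "replicate j False @ w"]
    by (simp add: replicate_app_Cons_same)
  then show ?case
    unfolding funpow_Suc_right using Suc.IH by (rule has_branch_comp)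
qed (simp add: has_branch_def)

lemma x0_x1_funpow_ones:
  "has_branch (tmult x0 x1 ^^ r) (True # w) (replicate (2 * r + 1) True @ w)"
proof (induction r arbitrary: w)
  case (Suc r)
  have "has_branch (tmult x0 x1) (True # w) (True # True # True # w)"
    using has_branch_append[OF x0_x1_branches(4), of w] by simp
  moreover have "has_branch (tmult x0 x1 ^^ r) (True # True # True # w)
      (replicate (2 * Suc r + 1) True @ w)"
    using Suc.IH[of "True # True # w"] by (simp add: replicate_app_Cons_same)
  ultimately show ?case
    unfolding funpow_Suc_right by (rule has_branch_comp)
qed (simp add: has_branch_def)

lemma x0_x1_funpow_branches:
  "has_branch (tmult x0 x1 ^^ (Suc j + r))
     (replicate (Suc j) False @ [True, False]) (replicate (2 * r + 1) True @ [False])"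
  "has_branch (tmult x0 x1 ^^ (Suc j + r))
     (replicate (Suc j) False @ [True, True]) (replicate (2 * r + 1) True @ [True, False])"
proof -
  have split: "tmult x0 x1 ^^ (Suc j + r) = tmult x0 x1 ^^ r \<circ> (tmult x0 x1 \<circ> tmult x0 x1 ^^ j)"
    by (simp only: add.commute[of "Suc j"] funpow_add funpow.simps(2))
  have zeros: "has_branch (tmult x0 x1 ^^ j) (replicate (Suc j) False @ [True, b]) [False, True, b]" for b
    using x0_x1_funpow_zeros[of j "[True, b]"] by (simp add: replicate_app_Cons_same)
  show
    "has_branch (tmult x0 x1 ^^ (Suc j + r))
       (replicate (Suc j) False @ [True, False]) (replicate (2 * r + 1) True @ [False])"
    unfolding split
    by (rule has_branch_comp[OF has_branch_comp[OF zeros x0_x1_branches(2)] x0_x1_funpow_ones])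
  show
    "has_branch (tmult x0 x1 ^^ (Suc j + r))
       (replicate (Suc j) False @ [True, True]) (replicate (2 * r + 1) True @ [True, False])"
    unfolding split
    by (rule has_branch_comp[OF has_branch_comp[OF zeros x0_x1_branches(3)] x0_x1_funpow_ones])
qed

lemma funpow_conj:
  assumes "bij g"
  shows "(g \<circ> (h \<circ> inv g)) ^^ N = g \<circ> (h ^^ N \<circ> inv g)"
proof (induction N)
  case 0
  then show ?case
    using assms by (simp add: fun_eq_iff bij_is_surj surj_f_inv_f)
next
  case (Suc N)
  then show ?case
    using assms by (simp add: fun_eq_iff bij_is_inj)
qed

lemma funpow_in_cyclic_sub: "h ^^ N \<in> cyclic_sub h"
  unfolding cyclic_sub_def by (rule range_eqI[of _ _ "int N"]) (simp add: tpow_def)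

lemma bij_if_bij_betw_and_fixes_outside:
  assumes "bij_betw f A A" and "\<And>x. x \<notin> A \<Longrightarrow> f x = x"
  shows "bij f"
proof -
  have "bij_betw f (- A) (- A)"
    using bij_betw_id[of "- A"] by (rule bij_betw_cong[THEN iffD1, rotated]) (simp add: assms(2))
  from bij_betw_disjoint_Un[OF assms(1) this] show ?thesis by simp
qed

lemma mono_on_glue:
  fixes f :: "'a::linorder \<Rightarrow> 'b::order"
  assumes "mono_on {a..b} f" "mono_on {b..c} f"
  shows "mono_on {a..c} f"
proof (rule mono_onI)
  fix x y assume xy: "x \<in> {a..c}" "y \<in> {a..c}" "x \<le> y"
  show "f x \<le> f y"
  proof (cases "y \<le> b")
    case True then show ?thesis using assms(1) xy by (auto intro: mono_onD)
  next
    case y: False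
    show ?thesis
    proof (cases "b \<le> x")
      case True then show ?thesis using assms(2) xy by (auto intro: mono_onD)
    next
      case False
      then have "f x \<le> f b" "f b \<le> f y"
        using assms xy y by (auto intro: mono_onD)
      then show ?thesis by (rule order_trans)
    qed
  qed
qed

lemma mono_on_pieces:
  fixes f :: "'a::linorder \<Rightarrow> 'b::order"
  assumes "bs \<noteq> []" "\<And>i. i < length bs - 1 \<Longrightarrow> mono_on {bs ! i .. bs ! Suc i} f"
  shows "mono_on {hd bs .. last bs} f"
  using assms
proof (induction bs)
  case (Cons b bs)
  show ?case
  proof (cases "bs = []")
    case False
    have "mono_on {b .. hd bs} f"
      using Cons.prems(2)[of 0] False by (simp add: hd_conv_nth)
    moreover have "mono_on {hd bs .. last bs} f"
      using Cons.prems(2)[of "Suc i" for i] False by (intro Cons.IH) auto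
    ultimately show ?thesis
      using False by (simp add: mono_on_glue)
  qed (auto simp: mono_on_def)
qed simp

lemma fixes_ends_if_mono_on_onto:
  fixes f :: "'a::order \<Rightarrow> 'a"
  assumes "a \<le> b" "mono_on {a..b} f" "f ` {a..b} = {a..b}"
  shows "f a = a" "f b = b"
proof -
  have "a \<in> f ` {a..b}" "b \<in> f ` {a..b}" "f a \<in> {a..b}" "f b \<in> {a..b}"
    using assms(1,3) by auto
  then obtain x y where "x \<in> {a..b}" "f x = a" "y \<in> {a..b}" "f y = b"
    by blast
  then have "f a \<le> a" "b \<le> f b"
    using assms(1,2) by (auto intro!: mono_onD[of "{a..b}" f])
  with \<open>f a \<in> {a..b}\<close> \<open>f b \<in> {a..b}\<close> show "f a = a" "f b = b" by auto
qed

lemma thompson_F_bij: "g \<in> thompson_F \<Longrightarrow> bij g"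
  unfolding thompson_F_def by (blast intro: bij_if_bij_betw_and_fixes_outside)

lemma thompson_F_fixes_0_1:
  assumes "g \<in> thompson_F"
  shows "g 0 = 0" "g 1 = 1"
proof -
  obtain bs :: "real list" where bs: "length bs \<ge> 2" "hd bs = 0" "last bs = 1"
    and pieces: "\<forall>i < length bs - 1. \<exists>k::int. \<forall>x\<in>{bs ! i .. bs ! Suc i}.
        g x = g (bs ! i) + 2 powi k * (x - bs ! i)"
    using assms unfolding thompson_F_def by blast
  have "mono_on {bs ! i .. bs ! Suc i} g" if i: "i < length bs - 1" for i
  proof -
    obtain k :: int where k: "\<forall>x\<in>{bs ! i .. bs ! Suc i}. g x = g (bs ! i) + 2 powi k * (x - bs ! i)"
      using pieces i by blast
    show ?thesis
    proof (rule mono_onI)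
      fix x y assume xy: "x \<in> {bs ! i .. bs ! Suc i}" "y \<in> {bs ! i .. bs ! Suc i}" "x \<le> y"
      have "g x = g (bs ! i) + 2 powi k * (x - bs ! i)" "g y = g (bs ! i) + 2 powi k * (y - bs ! i)"
        using k xy by blast+
      moreover have "2 powi k * (x - bs ! i) \<le> 2 powi k * (y - bs ! i)"
        using xy by (intro mult_left_mono) simp_all
      ultimately show "g x \<le> g y" by linarith
    qed
  qed
  then have "mono_on {0..1} g"
    using mono_on_pieces[of bs g] bs by force
  moreover have "g ` {0..1} = {0..1}"
    using assms by (simp add: thompson_F_def bij_betw_def)
  ultimately show "g 0 = 0" "g 1 = 1"
    using fixes_ends_if_mono_on_onto[of 0 1 g] by simp_all
qed

lemma thompson_F_linear_near_0:
  assumes "g \<in> thompson_F"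
  obtains a :: int and \<delta> :: real where "\<delta> > 0" "\<forall>x\<in>{0..\<delta>}. g x = 2 powi a * x"
proof -
  obtain bs :: "real list" where bs: "length bs \<ge> 2" "hd bs = 0" "sorted_wrt (<) bs"
    and pieces: "\<forall>i < length bs - 1. \<exists>k::int. \<forall>x\<in>{bs ! i .. bs ! Suc i}.
        g x = g (bs ! i) + 2 powi k * (x - bs ! i)"
    using assms unfolding thompson_F_def by blast
  have b0: "bs ! 0 = 0"
    using bs(1,2) by (metis hd_conv_nth list.size(3) not_numeral_le_zero)
  obtain a :: int where a: "\<forall>x\<in>{0 .. bs ! 1}. g x = g 0 + 2 powi a * (x - 0)"
    using pieces[rule_format, of 0] bs b0 by auto
  show ?thesis
  proof (rule that)
    show "bs ! 1 > 0"
      using bs b0 sorted_wrt_nth_less[of "(<)" bs 0 1] by simp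
    show "\<forall>x\<in>{0 .. bs ! 1}. g x = 2 powi a * x"
      using a thompson_F_fixes_0_1(1)[OF assms] by simp
  qed
qed

lemma thompson_F_linear_near_1:
  assumes "g \<in> thompson_F"
  obtains b :: int and \<eta> :: real where "\<eta> > 0" "\<forall>y\<in>{1 - \<eta>..1}. g y = 1 - 2 powi b * (1 - y)"
proof -
  obtain bs :: "real list" where bs: "length bs \<ge> 2" "last bs = 1" "sorted_wrt (<) bs"
    and pieces: "\<forall>i < length bs - 1. \<exists>k::int. \<forall>x\<in>{bs ! i .. bs ! Suc i}.
        g x = g (bs ! i) + 2 powi k * (x - bs ! i)"
    using assms unfolding thompson_F_def by blast
  define i where "i = length bs - 2"
  define p where "p = bs ! i"
  have i: "i < length bs - 1" "Suc i = length bs - 1"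
    using bs(1) by (simp_all add: i_def)
  have last: "bs ! Suc i = 1"
    using bs(1,2) i(2) by (metis last_conv_nth list.size(3) not_numeral_le_zero)
  have "p < 1"
    using bs(3) i last sorted_wrt_nth_less[of "(<)" bs i "Suc i"] by (simp add: p_def)
  obtain b :: int where b: "\<forall>x\<in>{p..1}. g x = g p + 2 powi b * (x - p)"
    using pieces[rule_format, OF i(1)] last unfolding p_def by auto
  have "g p = 1 - 2 powi b * (1 - p)"
    using b[rule_format, of 1] \<open>p < 1\<close> thompson_F_fixes_0_1(2)[OF assms] by simp
  show ?thesis
  proof (rule that)
    show "1 - p > 0"
      using \<open>p < 1\<close> by simp
    show "\<forall>y\<in>{1 - (1 - p)..1}. g y = 1 - 2 powi b * (1 - y)"
      using b \<open>g p = 1 - 2 powi b * (1 - p)\<close> by (simp add: algebra_simps)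
  qed
qed

theorem lemma3p1:
  assumes "g \<in> thompson_F"
  shows "\<exists>f \<in> cyclic_sub (tconj (tmult x0 x1) g). \<exists>m n :: nat.
           has_branch f (replicate m False @ [True, False]) (replicate n True @ [False]) \<and>
           has_branch f (replicate m False @ [True, True]) (replicate (Suc n) True @ [False])"
proof -
  have bij: "bij g"
    using assms by (rule thompson_F_bij)
  obtain p q where zeros: "has_branch g (replicate p False) (replicate q False)"
    using thompson_F_linear_near_0[OF assms] has_branch_zeros_if_linear_near_0 by metis
  obtain p' q' where ones: "has_branch g (replicate p' True) (replicate q' True)"
    using thompson_F_linear_near_1[OF assms] has_branch_ones_if_linear_near_1 by metis
  define n where "n = q' + Suc p'"
  define f where "f = tconj (tmult x0 x1) g ^^ (Suc p + p')"
  have f_eq: "f = g \<circ> (tmult x0 x1 ^^ (Suc p + p') \<circ> inv g)"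
    unfolding f_def tconj_def tmult_def using funpow_conj[OF bij] by simp
  have inv_g: "has_branch (inv g) (replicate (Suc q) False @ [True, b]) (replicate (Suc p) False @ [True, b])" for b
    using has_branch_inv[OF bij_is_inj[OF bij] has_branch_replicate_shift[OF zeros, of 1]] by simp
  have g: "has_branch g (replicate (2 * p' + 1) True @ w) (replicate n True @ w)" for w
    using has_branch_replicate_shift[OF ones, of "Suc p'" w] by (simp add: n_def mult_2)
  have "has_branch f (replicate (Suc q) False @ [True, False]) (replicate n True @ [False])"
    unfolding f_eq by (rule has_branch_comp[OF has_branch_comp[OF inv_g x0_x1_funpow_branches(1)] g])
  moreover have "has_branch f (replicate (Suc q) False @ [True, True]) (replicate (Suc n) True @ [False])"
    using has_branch_comp[OF has_branch_comp[OF inv_g x0_x1_funpow_branches(2)] g]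
    by (simp add: f_eq replicate_app_Cons_same)
  ultimately show ?thesis
    using funpow_in_cyclic_sub unfolding f_def by blast
qed

end
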